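(* Let $f\in\mathbb{Z}_2[x]$. Let $\sigma$ be a cycle of $f_n$ ($n\ge1$) that grows, and suppose that some cycle $\tau$ of $f_m$, $m>n$, lying above $\sigma$ also grows (the cycles lying above $\sigma$ at intermediate levels may split). Then every cycle lying above $\tau$, at every level $>m$, grows; i.e. $\tau$ grows forever.
   Context: $f_n$ is the induced map on $\mathbb{Z}/2^n\mathbb{Z}$, $f_n(x\bmod 2^n)=f(x)\bmod 2^n$. A $k$-cycle of $f_n$ is a tuple $\sigma=(x_1,\dots,x_k)$ of distinct elements with $f_n(x_i)=x_{i+1}$, $f_n(x_k)=x_1$. A cycle $\tau$ of $f_m$, $m\ge n$, lies above $\sigma$ if every point of $\tau$ reduces mod $2^n$ into $\sigma$. The lifts of $\sigma$ are the cycles of $f_{n+1}$ in $\{y:y\bmod 2^n\in\sigma\}$; $\sigma$ grows if this set is a single cycle of length $2k$ and splits if it is the union of two cycles of length $k$. *)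

theory Defs
  imports Main
begin

text \<open>2-adic integers as the inverse limit of the rings Z/2^n Z: a 2-adic integer is a
  compatible sequence of residues a n in {0..<2^n}.\<close>
definition is_Z2 :: "(nat \<Rightarrow> int) \<Rightarrow> bool" where
  "is_Z2 a \<longleftrightarrow> (\<forall>n. 0 \<le> a n \<and> a n < 2 ^ n) \<and> (\<forall>n. a (Suc n) mod 2 ^ n = a n)"

text \<open>A polynomial in Z_2[x] is a list of 2-adic coefficients (constant term first).\<close>
definition is_Z2_poly :: "(nat \<Rightarrow> int) list \<Rightarrow> bool" where
  "is_Z2_poly cs \<longleftrightarrow> (\<forall>c\<in>set cs. is_Z2 c)"

definition fmap :: "(nat \<Rightarrow> int) list \<Rightarrow> nat \<Rightarrow> int \<Rightarrow> int" where
  "fmap cs n x = (\<Sum>i<length cs. (cs ! i) n * x ^ i) mod 2 ^ n"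

definition is_cycle :: "(nat \<Rightarrow> int) list \<Rightarrow> nat \<Rightarrow> int set \<Rightarrow> bool" where
  "is_cycle cs n S \<longleftrightarrow> (\<exists>x. 0 \<le> x \<and> x < 2 ^ n \<and> (\<exists>k>0. (fmap cs n ^^ k) x = x)
       \<and> S = {(fmap cs n ^^ i) x | i. True})"

definition lies_above :: "(nat \<Rightarrow> int) list \<Rightarrow> nat \<Rightarrow> int set \<Rightarrow> nat \<Rightarrow> int set \<Rightarrow> bool" where
  "lies_above cs n S m T \<longleftrightarrow> n \<le> m \<and> is_cycle cs m T \<and> (\<forall>y\<in>T. y mod 2 ^ n \<in> S)"

definition lift_set :: "nat \<Rightarrow> int set \<Rightarrow> int set" where
  "lift_set n S = {y. 0 \<le> y \<and> y < 2 ^ Suc n \<and> y mod 2 ^ n \<in> S}"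

definition grows :: "(nat \<Rightarrow> int) list \<Rightarrow> nat \<Rightarrow> int set \<Rightarrow> bool" where
  "grows cs n S \<longleftrightarrow> is_cycle cs (Suc n) (lift_set n S) \<and> card (lift_set n S) = 2 * card S"

end

(*
  Replace f by an integer polynomial F that agrees with f modulo 2^N for the levels in question.
  If a point x returns after P steps with (F^P)(x) = x + h, Taylor expansion of F^P gives
  (F^(2P))(x) = x + h (1 + D) mod h^2, where D = (F^P)'(x) is the product of the values of F'
  along the orbit, and D mod 4 only depends on x mod 2.

  Growth of sigma (period k at level n, period 2k at level n+1, n >= 1) forces h(1 + D) to vanish
  modulo 2^(n+1) with h = 2^n b, b odd; hence D is odd and (F^(2k))'(x) = D^2 = 1 mod 4. The period
  K of tau is a multiple of 2k, so (F^K)'(x) = 1 mod 4 as well, and growth of tau means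
  (F^K)(x) = x + 2^m b with b odd. With m >= 2 and derivative 1 mod 4 these two properties
  reproduce themselves when K is doubled and m raised by one. Hence at every level m + e the
  point x has period 2^e K, so its orbit fills all 2^e K residues lying above tau: a cycle above
  tau is this whole set, and its lift is again a single cycle.
*)

theory Submission
  imports Defs "HOL-Number_Theory.Cong" "HOL-Computational_Algebra.Polynomial"
begin

section \<open>Periodic points\<close>

abbreviation forward_orbit :: "('a \<Rightarrow> 'a) \<Rightarrow> 'a \<Rightarrow> 'a set" where
  "forward_orbit h x \<equiv> {(h ^^ i) x | i. True}"

definition min_period :: "('a \<Rightarrow> 'a) \<Rightarrow> 'a \<Rightarrow> nat \<Rightarrow> bool" where
  "min_period h x p \<longleftrightarrow>
    p > 0 \<and> (h ^^ p) x = x \<and> (\<forall>i. 0 < i \<and> i < p \<longrightarrow> (h ^^ i) x \<noteq> x)"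

lemma min_period_pos: "min_period h x p \<Longrightarrow> 0 < p"
  and min_period_fixpoint: "min_period h x p \<Longrightarrow> (h ^^ p) x = x"
  and min_period_minimal:
    "min_period h x p \<Longrightarrow> 0 < i \<Longrightarrow> i < p \<Longrightarrow> (h ^^ i) x \<noteq> x"
  unfolding min_period_def by blast+

lemma min_period_exists:
  assumes "(h ^^ q) x = x" "q > 0"
  shows "\<exists>p. min_period h x p"
proof -
  let ?P = "\<lambda>p. p > 0 \<and> (h ^^ p) x = x"
  have "?P (LEAST p. ?P p)" by (rule LeastI[of ?P q]) (use assms in auto)
  moreover have "\<forall>i. 0 < i \<and> i < (LEAST p. ?P p) \<longrightarrow> (h ^^ i) x \<noteq> x"
    using not_less_Least[of _ ?P] by blast
  ultimately show ?thesis unfolding min_period_def by blast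
qed

lemma funpow_mult_fixpoint: "(h ^^ p) x = x \<Longrightarrow> (h ^^ (p * c)) x = x"
  by (induction c) (simp_all add: funpow_add)

lemma min_period_funpow_mod:
  assumes "min_period h x p"
  shows "(h ^^ a) x = (h ^^ (a mod p)) x"
proof -
  have "(h ^^ (p * (a div p))) x = x"
    using min_period_fixpoint[OF assms] by (rule funpow_mult_fixpoint)
  moreover have "(h ^^ a) x = (h ^^ (a mod p + p * (a div p))) x" by simp
  ultimately show ?thesis by (simp only: funpow_add comp_apply)
qed

lemma min_period_funpow_eq_iff:
  assumes "min_period h x p"
  shows "(h ^^ a) x = x \<longleftrightarrow> p dvd a"
proof
  assume "(h ^^ a) x = x"
  then have "(h ^^ (a mod p)) x = x" by (simp only: min_period_funpow_mod[OF assms, of a, symmetric])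
  moreover have "a mod p < p" using min_period_pos[OF assms] by simp
  ultimately have "\<not> 0 < a mod p" using min_period_minimal[OF assms, of "a mod p"] by auto
  then show "p dvd a" by (simp add: dvd_eq_mod_eq_0)
next
  assume "p dvd a"
  then have "(h ^^ (a mod p)) x = x" by simp
  then show "(h ^^ a) x = x" by (simp only: min_period_funpow_mod[OF assms, of a])
qed

lemma forward_orbit_min_period:
  assumes "min_period h x p"
  shows "forward_orbit h x = (\<lambda>i. (h ^^ i) x) ` {..<p}"
proof (intro equalityI subsetI)
  fix z assume "z \<in> forward_orbit h x"
  then obtain i where "z = (h ^^ i) x" by blast
  then have "z = (h ^^ (i mod p)) x" using min_period_funpow_mod[OF assms, of i] by (rule trans)
  moreover have "i mod p < p" using min_period_pos[OF assms] by simp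
  ultimately show "z \<in> (\<lambda>i. (h ^^ i) x) ` {..<p}" by blast
qed blast

lemma card_forward_orbit:
  assumes "min_period h x p"
  shows "card (forward_orbit h x) = p"
proof -
  have "inj_on (\<lambda>i. (h ^^ i) x) {..<p}"
  proof (rule inj_onI)
    have neq: "(h ^^ i) x \<noteq> (h ^^ j) x" if "i < j" "j < p" for i j
    proof
      assume eq: "(h ^^ i) x = (h ^^ j) x"
      have "(h ^^ (p - j + i)) x = (h ^^ (p - j)) ((h ^^ j) x)"
        using eq by (simp only: funpow_add comp_apply)
      also have "\<dots> = (h ^^ p) x" using that funpow_add[of "p - j" j h] by simp
      also have "\<dots> = x" using min_period_fixpoint[OF assms] .
      finally have "p dvd p - j + i" using min_period_funpow_eq_iff[OF assms] by simp
      with that show False by (auto dest: dvd_imp_le)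
    qed
    fix i j assume "i \<in> {..<p}" "j \<in> {..<p}" "(h ^^ i) x = (h ^^ j) x"
    then show "i = j"
      using neq[of i j] neq[of j i] by (cases i j rule: linorder_cases) auto
  qed
  then show ?thesis unfolding forward_orbit_min_period[OF assms] by (simp add: card_image)
qed

lemma funpow_commute: "(h ^^ a) ((h ^^ b) x) = (h ^^ b) ((h ^^ a) x)"
proof -
  have "(h ^^ a) ((h ^^ b) x) = (h ^^ (a + b)) x" by (simp only: funpow_add comp_apply)
  also have "\<dots> = (h ^^ (b + a)) x" by (simp only: add.commute)
  also have "\<dots> = (h ^^ b) ((h ^^ a) x)" by (simp only: funpow_add comp_apply)
  finally show ?thesis .
qed

lemma min_period_forward_orbit_point:
  assumes "min_period h x p" and "y \<in> forward_orbit h x"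
  shows "min_period h y p" and "forward_orbit h y = forward_orbit h x"
proof -
  have "y \<in> (\<lambda>i. (h ^^ i) x) ` {..<p}"
    using assms(2) unfolding forward_orbit_min_period[OF assms(1)] .
  then obtain i where "i < p" and y: "y = (h ^^ i) x" by blast
  define r where "r = p - i"
  have "(h ^^ (r + i)) x = x"
    using \<open>i < p\<close> min_period_fixpoint[OF assms(1)] unfolding r_def by simp
  then have return_to_x: "(h ^^ r) y = x" unfolding y by (simp only: funpow_add comp_apply)
  have "(h ^^ a) y = y \<longleftrightarrow> (h ^^ a) x = x" for a
  proof
    have "(h ^^ a) x = (h ^^ r) ((h ^^ a) y)"
      unfolding return_to_x[symmetric] by (rule funpow_commute)
    then show "(h ^^ a) y = y \<Longrightarrow> (h ^^ a) x = x" using return_to_x by simp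
    have "(h ^^ a) y = (h ^^ i) ((h ^^ a) x)" unfolding y by (rule funpow_commute)
    then show "(h ^^ a) x = x \<Longrightarrow> (h ^^ a) y = y" using y by simp
  qed
  then show "min_period h y p" using assms(1) unfolding min_period_def by presburger
  have "(h ^^ j) y = (h ^^ (j + i)) x" for j
    unfolding y by (simp only: funpow_add comp_apply)
  moreover have "(h ^^ j) x = (h ^^ (j + r)) y" for j
    unfolding return_to_x[symmetric] by (simp only: funpow_add comp_apply)
  ultimately show "forward_orbit h y = forward_orbit h x" by blast
qed

section \<open>Taylor expansion of polynomials to first order\<close>

lemma poly_taylor_dvd:
  fixes p :: "'a::idom poly"
  shows "h\<^sup>2 dvd poly p (x + h) - poly p x - h * poly (pderiv p) x"
proof (induction p)
  case 0
  show ?case by simp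
next
  case (pCons a p)
  obtain q where "poly p (x + h) - poly p x - h * poly (pderiv p) x = h\<^sup>2 * q"
    using pCons.IH by (elim dvdE)
  then have q: "poly p (x + h) = poly p x + h * poly (pderiv p) x + h\<^sup>2 * q"
    by (simp add: algebra_simps)
  have "poly (pCons a p) (x + h) - poly (pCons a p) x - h * poly (pderiv (pCons a p)) x
      = h\<^sup>2 * (x * q + poly (pderiv p) x + h * q)"
    unfolding poly_pCons pderiv_pCons poly_add q by (simp add: algebra_simps power2_eq_square)
  then show ?case by simp
qed

lemma pderiv_pderiv_even:
  fixes p :: "'a::idom poly"
  shows "\<exists>q. pderiv (pderiv p) = smult 2 q"
proof (induction p)
  case 0
  show ?case by simp
next
  case (pCons a p)
  obtain q where q: "pderiv (pderiv p) = smult 2 q" using pCons.IH by blast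
  have smult_2: "smult 2 r = r + r" for r :: "'a poly"
    by (metis mult_2 numeral_mult_conv_smult)
  have "pderiv (pderiv (pCons a p)) = smult 2 (pderiv p + pCons 0 q)"
    unfolding pderiv_pCons pderiv_add q smult_add_right smult_pCons mult_zero_right smult_2
    by (simp add: add.assoc)
  then show ?case by blast
qed

lemma poly_pderiv_cong_mod_4:
  fixes p :: "int poly"
  shows "[poly (pderiv p) (x + 2 * d) = poly (pderiv p) x] (mod 4)"
proof -
  obtain q where q: "pderiv (pderiv p) = smult 2 q" using pderiv_pderiv_even by blast
  have "4 dvd (2 * d)\<^sup>2" by (simp add: power_mult_distrib)
  then have "4 dvd poly (pderiv p) (x + 2 * d) - poly (pderiv p) x - 2 * d * poly (pderiv (pderiv p)) x"
    using poly_taylor_dvd by (rule dvd_trans)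
  then have "4 dvd poly (pderiv p) (x + 2 * d) - poly (pderiv p) x - 4 * (d * poly q x)"
    by (simp add: q algebra_simps)
  then have "4 dvd poly (pderiv p) (x + 2 * d) - poly (pderiv p) x"
    by (metis diff_add_cancel dvd_add dvd_triv_left)
  then show ?thesis by (simp add: cong_iff_dvd_diff)
qed

lemma poly_cong:
  fixes p :: "int poly"
  shows "[x = y] (mod M) \<Longrightarrow> [poly p x = poly p y] (mod M)"
  by (induction p) (auto intro: cong_add cong_mult)

section \<open>Iterates of an integer polynomial\<close>

lemma odd_square_cong_1_mod_4: "odd (a::int) \<Longrightarrow> [a * a = 1] (mod 4)"
  by (auto elim!: oddE simp: cong_iff_dvd_diff algebra_simps)

lemma cong_exact_power_2_iff:
  fixes a b :: int
  shows "[a = b] (mod 2 ^ j) \<and> \<not> [a = b] (mod 2 ^ Suc j) \<longleftrightarrow>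
    (\<exists>c. a = b + 2 ^ j * c \<and> odd c)"
proof
  assume cong: "[a = b] (mod 2 ^ j) \<and> \<not> [a = b] (mod 2 ^ Suc j)"
  obtain c where c: "a = b + 2 ^ j * c"
    using cong_sym[of a b "2 ^ j"] cong by (auto simp: cong_iff_lin)
  with cong have "odd c" by (auto simp: cong_iff_dvd_diff)
  with c show "\<exists>c. a = b + 2 ^ j * c \<and> odd c" by blast
next
  assume "\<exists>c. a = b + 2 ^ j * c \<and> odd c"
  then show "[a = b] (mod 2 ^ j) \<and> \<not> [a = b] (mod 2 ^ Suc j)"
    by (auto simp: cong_iff_dvd_diff)
qed

text \<open>The derivative of the i-th iterate of poly p at x, by the chain rule.\<close>
definition iterate_deriv :: "int poly \<Rightarrow> nat \<Rightarrow> int \<Rightarrow> int" where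
  "iterate_deriv p i x = (\<Prod>l<i. poly (pderiv p) ((poly p ^^ l) x))"

context
  fixes p :: "int poly"
begin

lemma iterate_deriv_0 [simp]: "iterate_deriv p 0 x = 1"
  by (simp add: iterate_deriv_def)

lemma iterate_deriv_Suc: "iterate_deriv p (Suc i) x = poly (pderiv p) ((poly p ^^ i) x) * iterate_deriv p i x"
  by (simp add: iterate_deriv_def mult.commute)

lemma iterate_deriv_add:
  "iterate_deriv p (a + b) x = iterate_deriv p b ((poly p ^^ a) x) * iterate_deriv p a x"
proof (induction b)
  case 0
  show ?case by simp
next
  case (Suc b)
  have "(poly p ^^ (a + b)) x = (poly p ^^ b) ((poly p ^^ a) x)"
    by (simp only: add.commute[of a b] funpow_add comp_apply)
  then show ?case using Suc by (simp add: iterate_deriv_Suc)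
qed

lemma funpow_poly_cong: "[x = y] (mod M) \<Longrightarrow> [(poly p ^^ i) x = (poly p ^^ i) y] (mod M)"
  by (induction i) (simp_all add: poly_cong)

lemma iterate_deriv_cong_mod_4:
  "[x = y] (mod 2) \<Longrightarrow> [iterate_deriv p i x = iterate_deriv p i y] (mod 4)"
proof (induction i)
  case 0
  show ?case by simp
next
  case (Suc i)
  obtain d where d: "(poly p ^^ i) y = (poly p ^^ i) x + 2 * d"
    using funpow_poly_cong[OF Suc.prems, of i] by (auto simp: cong_iff_lin)
  have "[poly (pderiv p) ((poly p ^^ i) x) = poly (pderiv p) ((poly p ^^ i) y)] (mod 4)"
    unfolding d using poly_pderiv_cong_mod_4 by (rule cong_sym)
  then show ?case unfolding iterate_deriv_Suc using Suc by (intro cong_mult)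
qed

lemma funpow_poly_taylor_dvd: "h\<^sup>2 dvd (poly p ^^ i) (x + h) - (poly p ^^ i) x - h * iterate_deriv p i x"
proof (induction i)
  case 0
  show ?case by simp
next
  case (Suc i)
  define y where "y = (poly p ^^ i) x"
  define k where "k = (poly p ^^ i) (x + h) - y"
  obtain q where "k - h * iterate_deriv p i x = h\<^sup>2 * q"
    using Suc.IH unfolding k_def y_def by (elim dvdE)
  then have k: "k = h * (iterate_deriv p i x + h * q)"
    by (simp add: algebra_simps power2_eq_square)
  have "h\<^sup>2 dvd k\<^sup>2" unfolding k by (simp add: power_mult_distrib)
  then have taylor: "h\<^sup>2 dvd poly p (y + k) - poly p y - k * poly (pderiv p) y"
    using poly_taylor_dvd by (rule dvd_trans)
  have "(poly p ^^ Suc i) (x + h) = poly p (y + k)" "(poly p ^^ Suc i) x = poly p y"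
    unfolding k_def y_def by simp_all
  then have "(poly p ^^ Suc i) (x + h) - (poly p ^^ Suc i) x - h * iterate_deriv p (Suc i) x
      = (poly p (y + k) - poly p y - k * poly (pderiv p) y) + h\<^sup>2 * (q * poly (pderiv p) y)"
    unfolding iterate_deriv_Suc y_def[symmetric] k by (simp add: algebra_simps power2_eq_square)
  then show ?case by (simp only:) (rule dvd_add[OF taylor dvd_triv_left])
qed

lemma funpow_poly_mult_cong: "[(poly p ^^ P) x = x] (mod M) \<Longrightarrow> [(poly p ^^ (P * c)) x = x] (mod M)"
proof (induction c)
  case 0
  show ?case by simp
next
  case (Suc c)
  have "(poly p ^^ (P * Suc c)) x = (poly p ^^ (P * c)) ((poly p ^^ P) x)"
    by (simp only: mult_Suc_right add.commute[of P] funpow_add comp_apply)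
  moreover have "[(poly p ^^ (P * c)) ((poly p ^^ P) x) = (poly p ^^ (P * c)) x] (mod M)"
    using Suc.prems by (rule funpow_poly_cong)
  ultimately show ?case using Suc by (metis cong_trans)
qed

lemma iterate_deriv_mult_cong_1:
  assumes "[(poly p ^^ P) x = x] (mod 2)" and "[iterate_deriv p P x = 1] (mod 4)"
  shows "[iterate_deriv p (P * c) x = 1] (mod 4)"
proof (induction c)
  case 0
  show ?case by simp
next
  case (Suc c)
  have "[(poly p ^^ (P * c)) x = x] (mod 2)" using assms(1) by (rule funpow_poly_mult_cong)
  then have "[iterate_deriv p P ((poly p ^^ (P * c)) x) = 1] (mod 4)"
    using iterate_deriv_cong_mod_4 assms(2) by (metis cong_trans)
  then have "[iterate_deriv p P ((poly p ^^ (P * c)) x) * iterate_deriv p (P * c) x = 1 * 1] (mod 4)"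
    using Suc by (intro cong_mult)
  then show ?case by (simp add: mult_Suc_right add.commute[of P] iterate_deriv_add)
qed

lemma funpow_poly_double:
  assumes "(poly p ^^ P) x = x + h"
  shows "\<exists>r. (poly p ^^ (2 * P)) x = x + h * (1 + iterate_deriv p P x) + h\<^sup>2 * r"
proof -
  obtain r where "(poly p ^^ P) (x + h) - (poly p ^^ P) x - h * iterate_deriv p P x = h\<^sup>2 * r"
    using funpow_poly_taylor_dvd[of h P x] by (elim dvdE)
  moreover have "(poly p ^^ (2 * P)) x = (poly p ^^ P) (x + h)"
    using assms by (simp only: mult_2 funpow_add comp_apply)
  ultimately show ?thesis using assms by (auto simp: algebra_simps)
qed

lemma iterate_deriv_double_cong_1:
  assumes "n \<ge> 1"
    and "(poly p ^^ k) x = x + 2 ^ n * b" and "odd b"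
    and "[(poly p ^^ (2 * k)) x = x] (mod 2 ^ Suc n)"
  shows "[iterate_deriv p (2 * k) x = 1] (mod 4)"
proof -
  define D where "D = iterate_deriv p k x"
  obtain r where r: "(poly p ^^ (2 * k)) x = x + 2 ^ n * b * (1 + D) + (2 ^ n * b)\<^sup>2 * r"
    using funpow_poly_double[OF assms(2)] unfolding D_def by blast
  obtain s where s: "(poly p ^^ (2 * k)) x = x + 2 ^ Suc n * s"
    using cong_sym[OF assms(4)] by (auto simp: cong_iff_lin)
  obtain n' where n': "n = Suc n'" using \<open>n \<ge> 1\<close> by (cases n) auto
  define Q :: int where "Q = 2 ^ n'"
  have "2 * Q * (b * (1 + D)) = 2 * Q * (2 * (s - Q * b\<^sup>2 * r))"
    using r s unfolding n' Q_def by (simp add: algebra_simps power2_eq_square)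
  then have "b * (1 + D) = 2 * (s - Q * b\<^sup>2 * r)" unfolding Q_def by simp
  then have "even (b * (1 + D))" by simp
  then have "odd D" using \<open>odd b\<close> by simp
  have "[(poly p ^^ k) x = x] (mod 2)"
    using assms(2) \<open>n \<ge> 1\<close> by (simp add: cong_iff_dvd_diff dvd_power)
  then have "[iterate_deriv p k ((poly p ^^ k) x) * D = D * D] (mod 4)"
    unfolding D_def by (intro cong_mult iterate_deriv_cong_mod_4 cong_refl)
  also have "[D * D = 1] (mod 4)" using \<open>odd D\<close> by (rule odd_square_cong_1_mod_4)
  finally show ?thesis by (simp add: mult_2 iterate_deriv_add D_def)
qed

lemma funpow_double_exact:
  assumes "j \<ge> 2" and "(poly p ^^ P) x = x + 2 ^ j * b" and "odd b"
    and "[iterate_deriv p P x = 1] (mod 4)"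
  shows "\<exists>b'. (poly p ^^ (2 * P)) x = x + 2 ^ Suc j * b' \<and> odd b'"
    and "[iterate_deriv p (2 * P) x = 1] (mod 4)"
proof -
  obtain e where e: "iterate_deriv p P x = 1 + 4 * e"
    using cong_sym[OF assms(4)] by (auto simp: cong_iff_lin)
  obtain r where r: "(poly p ^^ (2 * P)) x
      = x + 2 ^ j * b * (1 + iterate_deriv p P x) + (2 ^ j * b)\<^sup>2 * r"
    using funpow_poly_double[OF assms(2)] by blast
  obtain j' where j': "j = Suc (Suc j')" using \<open>j \<ge> 2\<close> by (metis add_2_eq_Suc le_Suc_ex)
  define Q :: int where "Q = 2 ^ Suc j'"
  define b' where "b' = b * (1 + 2 * e) + Q * b\<^sup>2 * r"
  have "(poly p ^^ (2 * P)) x = x + 2 ^ Suc j * b'"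
    unfolding r e b'_def j' Q_def by (simp add: algebra_simps power2_eq_square)
  moreover have "odd b'" using \<open>odd b\<close> unfolding b'_def Q_def by simp
  ultimately show "\<exists>b'. (poly p ^^ (2 * P)) x = x + 2 ^ Suc j * b' \<and> odd b'" by blast
  have "[(poly p ^^ P) x = x] (mod 2)"
    using assms(1,2) by (simp add: cong_iff_dvd_diff dvd_power)
  then show "[iterate_deriv p (2 * P) x = 1] (mod 4)"
    using iterate_deriv_mult_cong_1[OF _ assms(4), of 2] by (simp add: mult.commute)
qed

lemma funpow_power_2_exact:
  assumes "j \<ge> 2" and "(poly p ^^ P) x = x + 2 ^ j * b" and "odd b"
    and "[iterate_deriv p P x = 1] (mod 4)"
  shows "\<exists>b. (poly p ^^ (P * 2 ^ e)) x = x + 2 ^ (j + e) * b \<and> odd b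
    \<and> [iterate_deriv p (P * 2 ^ e) x = 1] (mod 4)"
proof (induction e)
  case 0
  show ?case using assms by simp
next
  case (Suc e)
  then obtain b where "(poly p ^^ (P * 2 ^ e)) x = x + 2 ^ (j + e) * b" "odd b"
    "[iterate_deriv p (P * 2 ^ e) x = 1] (mod 4)" by blast
  from funpow_double_exact[OF _ this] show ?case
    using \<open>j \<ge> 2\<close> by (simp add: ac_simps)
qed

end

section \<open>Reduction of 2-adic polynomials\<close>

lemma is_Z2_mod:
  assumes "is_Z2 a" and "j \<le> N"
  shows "a N mod 2 ^ j = a j"
  using assms(2)
proof (induction N)
  case 0
  have "0 \<le> a 0 \<and> a 0 < 2 ^ 0" using assms(1) unfolding is_Z2_def by blast
  then show ?case using 0 by simp
next
  case (Suc N)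
  show ?case
  proof (cases "j = Suc N")
    case True
    have "0 \<le> a j \<and> a j < 2 ^ j" using assms(1) unfolding is_Z2_def by blast
    then show ?thesis using True by simp
  next
    case False
    then have "j \<le> N" using Suc.prems by simp
    then have "a (Suc N) mod 2 ^ j = a (Suc N) mod 2 ^ N mod 2 ^ j"
      by (simp add: mod_mod_cancel le_imp_power_dvd)
    also have "\<dots> = a j" using assms(1) Suc.IH[OF \<open>j \<le> N\<close>] unfolding is_Z2_def by simp
    finally show ?thesis .
  qed
qed

text \<open>An integer polynomial can only model the maps f_j up to some finite level N,
  since the coefficients of f are 2-adic.\<close>
definition agrees_upto :: "nat \<Rightarrow> (nat \<Rightarrow> int) list \<Rightarrow> int poly \<Rightarrow> bool" where
  "agrees_upto N f p \<longleftrightarrow> (\<forall>j\<le>N. \<forall>x. fmap f j x = poly p x mod 2 ^ j)"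

lemma is_Z2_poly_agrees_upto:
  assumes "is_Z2_poly f"
  shows "\<exists>p. agrees_upto N f p"
proof
  define p where "p = (\<Sum>i<length f. monom ((f ! i) N) i)"
  have "fmap f j x = poly p x mod 2 ^ j" if "j \<le> N" for j x
  proof -
    have "[(f ! i) j = (f ! i) N] (mod 2 ^ j)" if "i < length f" for i
    proof -
      have "is_Z2 (f ! i)" using assms \<open>i < length f\<close> unfolding is_Z2_poly_def by simp
      then show ?thesis
        using is_Z2_mod[of "f ! i" j N] \<open>j \<le> N\<close> unfolding is_Z2_def cong_def by simp
    qed
    then have "[(\<Sum>i<length f. (f ! i) j * x ^ i) = (\<Sum>i<length f. (f ! i) N * x ^ i)] (mod 2 ^ j)"
      by (intro cong_sum cong_mult cong_refl) simp
    then show ?thesis unfolding fmap_def p_def cong_def by (simp add: poly_sum poly_monom)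
  qed
  then show "agrees_upto N f p" unfolding agrees_upto_def by blast
qed

lemma fmap_funpow_agrees:
  assumes "agrees_upto N f p" and "j \<le> N"
  shows "(fmap f j ^^ i) (x mod 2 ^ j) = (poly p ^^ i) x mod 2 ^ j"
proof (induction i)
  case 0
  show ?case by simp
next
  case (Suc i)
  have "(fmap f j ^^ Suc i) (x mod 2 ^ j) = fmap f j ((poly p ^^ i) x mod 2 ^ j)"
    using Suc.IH by simp
  also have "\<dots> = poly p ((poly p ^^ i) x mod 2 ^ j) mod 2 ^ j"
    using assms unfolding agrees_upto_def by blast
  also have "\<dots> = poly p ((poly p ^^ i) x) mod 2 ^ j"
    using poly_cong[of "(poly p ^^ i) x mod 2 ^ j" "(poly p ^^ i) x" "2 ^ j" p]
    unfolding cong_def by simp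
  finally show ?case by simp
qed

lemma fmap_funpow_eq_iff_cong:
  assumes "agrees_upto N f p" and "j \<le> N" and "0 \<le> x" and "x < 2 ^ j"
  shows "(fmap f j ^^ a) x = x \<longleftrightarrow> [(poly p ^^ a) x = x] (mod 2 ^ j)"
  using fmap_funpow_agrees[OF assms(1,2), of a x] assms(3,4) unfolding cong_def by simp

lemma fmap_funpow_range:
  "0 \<le> x \<Longrightarrow> x < 2 ^ j \<Longrightarrow> 0 \<le> (fmap f j ^^ i) x \<and> (fmap f j ^^ i) x < 2 ^ j"
  by (cases i) (simp_all add: fmap_def)

lemma is_cycle_min_period:
  assumes "is_cycle f j S"
  obtains z k where "0 \<le> z" "z < 2 ^ j" "min_period (fmap f j) z k" "S = forward_orbit (fmap f j) z"
  using assms min_period_exists unfolding is_cycle_def by metis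

lemma is_cycle_subset: "is_cycle f j S \<Longrightarrow> S \<subseteq> {0..<2 ^ j}"
  unfolding is_cycle_def using fmap_funpow_range by fastforce

lemma is_cycle_funpow_eq_iff:
  assumes "is_cycle f j S" and "y \<in> S"
  shows "(fmap f j ^^ a) y = y \<longleftrightarrow> card S dvd a"
proof -
  obtain z k where "min_period (fmap f j) z k" and S: "S = forward_orbit (fmap f j) z"
    using assms(1) by (rule is_cycle_min_period)
  then show ?thesis
    using assms(2) min_period_forward_orbit_point(1) min_period_funpow_eq_iff card_forward_orbit
    by metis
qed

lemma is_cycle_return_cong_iff:
  assumes "agrees_upto N f p" and "j \<le> N" and "is_cycle f j S" and "x mod 2 ^ j \<in> S"
  shows "[(poly p ^^ a) x = x] (mod 2 ^ j) \<longleftrightarrow> card S dvd a"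
  using is_cycle_funpow_eq_iff[OF assms(3,4), of a] fmap_funpow_agrees[OF assms(1,2), of a x]
  unfolding cong_def by simp

lemma grows_return_cong_iff:
  assumes "agrees_upto N f p" and "Suc n \<le> N" and "grows f n S" and "x mod 2 ^ n \<in> S"
  shows "[(poly p ^^ a) x = x] (mod 2 ^ Suc n) \<longleftrightarrow> 2 * card S dvd a"
proof -
  have "x mod 2 ^ Suc n mod 2 ^ n = x mod 2 ^ n" by (simp add: mod_mod_cancel)
  then have "x mod 2 ^ Suc n \<in> lift_set n S" using assms(4) unfolding lift_set_def by simp
  then show ?thesis
    using is_cycle_return_cong_iff[OF assms(1,2)] assms(3) unfolding grows_def by metis
qed

lemma is_cycle_card_pos:
  assumes "is_cycle f j S"
  shows "0 < card S"
proof -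
  obtain z k where z: "min_period (fmap f j) z k" and "S = forward_orbit (fmap f j) z"
    using assms by (rule is_cycle_min_period)
  then show ?thesis using card_forward_orbit[OF z] min_period_pos[OF z] by simp
qed

lemma is_cycle_subset_eq:
  assumes "is_cycle f j S" and "is_cycle f j T" and "S \<subseteq> T"
  shows "S = T"
proof -
  obtain z k where z: "min_period (fmap f j) z k" and S: "S = forward_orbit (fmap f j) z"
    using assms(1) by (rule is_cycle_min_period)
  obtain w l where w: "min_period (fmap f j) w l" and T: "T = forward_orbit (fmap f j) w"
    using assms(2) by (rule is_cycle_min_period)
  have "z = (fmap f j ^^ 0) z" by simp
  then have "z \<in> S" unfolding S by blast
  then have "z \<in> T" using assms(3) by blast
  then have "forward_orbit (fmap f j) z = T"
    unfolding T by (rule min_period_forward_orbit_point(2)[OF w])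
  then show ?thesis unfolding S .
qed

section \<open>Cycles that grow forever\<close>

definition residues_above :: "nat \<Rightarrow> int set \<Rightarrow> nat \<Rightarrow> int set" where
  "residues_above m T j = {y. 0 \<le> y \<and> y < 2 ^ j \<and> y mod 2 ^ m \<in> T}"

lemma residues_above_self: "T \<subseteq> {0..<2 ^ m} \<Longrightarrow> residues_above m T m = T"
  unfolding residues_above_def by auto

lemma lift_set_residues_above:
  assumes "m \<le> j"
  shows "lift_set j (residues_above m T j) = residues_above m T (Suc j)"
proof -
  have "y mod 2 ^ j mod 2 ^ m = y mod 2 ^ m" for y :: int
    using assms by (simp add: mod_mod_cancel le_imp_power_dvd)
  then show ?thesis unfolding lift_set_def residues_above_def by auto
qed

lemma card_lift_set:
  assumes "S \<subseteq> {0..<2 ^ n}"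
  shows "card (lift_set n S) = 2 * card S"
proof -
  have "finite S" using assms finite_subset by blast
  have "lift_set n S = S \<union> (\<lambda>y. y + 2 ^ n) ` S"
  proof (intro equalityI subsetI)
    fix y assume y: "y \<in> lift_set n S"
    show "y \<in> S \<union> (\<lambda>y. y + 2 ^ n) ` S"
    proof (cases "y < 2 ^ n")
      case True
      then show ?thesis using y mod_pos_pos_trivial[of y "2 ^ n"] unfolding lift_set_def by auto
    next
      case False
      define r where "r = y - 2 ^ n"
      have "0 \<le> r" "r < 2 ^ n" using False y unfolding r_def lift_set_def by auto
      have "y mod 2 ^ n = (r + 2 ^ n) mod 2 ^ n" unfolding r_def by simp
      also have "\<dots> = r" using \<open>0 \<le> r\<close> \<open>r < 2 ^ n\<close> by (simp add: mod_pos_pos_trivial)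
      finally have "r \<in> S" using y unfolding lift_set_def by simp
      then show ?thesis unfolding r_def by (simp add: image_iff) (metis diff_add_cancel)
    qed
  next
    fix y assume "y \<in> S \<union> (\<lambda>y. y + 2 ^ n) ` S"
    then show "y \<in> lift_set n S" using assms unfolding lift_set_def by auto
  qed
  moreover have "S \<inter> (\<lambda>y. y + 2 ^ n) ` S = {}"
  proof (rule ccontr)
    assume "S \<inter> (\<lambda>y. y + 2 ^ n) ` S \<noteq> {}"
    then obtain y where "y \<in> S" "y + 2 ^ n \<in> S" by blast
    then have "0 \<le> y" "y + 2 ^ n < 2 ^ n" using assms by auto
    then show False by simp
  qed
  moreover have "card ((\<lambda>y. y + 2 ^ n) ` S) = card S" by (simp add: card_image)
  ultimately show ?thesis using \<open>finite S\<close> by (simp add: card_Un_disjoint)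
qed

lemma card_residues_above:
  assumes "T \<subseteq> {0..<2 ^ m}"
  shows "card (residues_above m T (m + e)) = 2 ^ e * card T"
proof (induction e)
  case 0
  show ?case using assms by (simp add: residues_above_self)
next
  case (Suc e)
  have "residues_above m T (m + e) \<subseteq> {0..<2 ^ (m + e)}" unfolding residues_above_def by auto
  then have "card (lift_set (m + e) (residues_above m T (m + e))) = 2 * (2 ^ e * card T)"
    using Suc.IH by (simp add: card_lift_set)
  then show ?case using lift_set_residues_above[of m "m + e" T] by simp
qed

lemma grows_iterate_deriv_cong_1:
  assumes "agrees_upto N f p" and "1 \<le> n" and "n < m" and "m \<le> N"
    and "is_cycle f n \<sigma>" and "grows f n \<sigma>"
    and "is_cycle f m \<tau>" and "\<forall>y\<in>\<tau>. y mod 2 ^ n \<in> \<sigma>" and "x \<in> \<tau>"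
  shows "[iterate_deriv p (card \<tau>) x = 1] (mod 4)"
proof -
  define k where "k = card \<sigma>"
  have "x mod 2 ^ n \<in> \<sigma>" using assms(8,9) by blast
  have return_Suc_n: "[(poly p ^^ a) x = x] (mod 2 ^ Suc n) \<longleftrightarrow> 2 * k dvd a" for a
    unfolding k_def using assms(1-4,6) \<open>x mod 2 ^ n \<in> \<sigma>\<close> by (intro grows_return_cong_iff) auto
  have "[(poly p ^^ k) x = x] (mod 2 ^ n)"
    unfolding k_def using assms(1-4,5) \<open>x mod 2 ^ n \<in> \<sigma>\<close> is_cycle_return_cong_iff by simp
  moreover have "\<not> [(poly p ^^ k) x = x] (mod 2 ^ Suc n)"
    using return_Suc_n is_cycle_card_pos[OF assms(5)] unfolding k_def by (simp add: nat_dvd_not_less)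
  ultimately obtain b where "(poly p ^^ k) x = x + 2 ^ n * b" "odd b"
    using cong_exact_power_2_iff by blast
  then have deriv_2k: "[iterate_deriv p (2 * k) x = 1] (mod 4)"
    using iterate_deriv_double_cong_1[OF \<open>1 \<le> n\<close>] return_Suc_n[of "2 * k"] by simp
  have "x mod 2 ^ m = x" using is_cycle_subset[OF assms(7)] assms(9) by auto
  then have "[(poly p ^^ card \<tau>) x = x] (mod 2 ^ m)"
    using is_cycle_return_cong_iff[OF assms(1,4,7)] assms(9) by simp
  moreover have "(2::int) ^ Suc n dvd 2 ^ m" using \<open>n < m\<close> by (intro le_imp_power_dvd) simp
  ultimately have "[(poly p ^^ card \<tau>) x = x] (mod 2 ^ Suc n)" by (rule cong_dvd_modulus)
  then obtain c where "card \<tau> = 2 * k * c" using return_Suc_n by blast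
  moreover have "[(poly p ^^ (2 * k)) x = x] (mod 2)"
    using return_Suc_n[of "2 * k"] cong_dvd_modulus[of _ _ "2 ^ Suc n" 2] by simp
  ultimately show ?thesis using iterate_deriv_mult_cong_1 deriv_2k by simp
qed

lemma grows_exact_displacement:
  assumes "agrees_upto N f p" and "Suc m \<le> N"
    and "is_cycle f m \<tau>" and "grows f m \<tau>" and "x \<in> \<tau>"
  shows "\<exists>b. (poly p ^^ card \<tau>) x = x + 2 ^ m * b \<and> odd b"
proof -
  have "x mod 2 ^ m = x" using is_cycle_subset[OF assms(3)] assms(5) by auto
  then have "x mod 2 ^ m \<in> \<tau>" using assms(5) by simp
  have "[(poly p ^^ card \<tau>) x = x] (mod 2 ^ m)"
    using is_cycle_return_cong_iff[OF assms(1) _ assms(3) \<open>x mod 2 ^ m \<in> \<tau>\<close>] assms(2) by simp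
  moreover have "\<not> [(poly p ^^ card \<tau>) x = x] (mod 2 ^ Suc m)"
    using grows_return_cong_iff[OF assms(1,2,4) \<open>x mod 2 ^ m \<in> \<tau>\<close>] is_cycle_card_pos[OF assms(3)]
    by (simp add: nat_dvd_not_less)
  ultimately show ?thesis using cong_exact_power_2_iff by blast
qed

lemma min_period_exact_displacement:
  assumes "agrees_upto N f p" and "m + e \<le> N" and "0 \<le> x" and "x < 2 ^ m"
    and "min_period (fmap f m) x K"
    and exact: "\<And>e. \<exists>b. (poly p ^^ (K * 2 ^ e)) x = x + 2 ^ (m + e) * b \<and> odd b"
  shows "min_period (fmap f (m + e)) x (K * 2 ^ e)"
proof -
  have "(2::int) ^ m \<le> 2 ^ (m + e)" by (rule power_increasing) simp_all
  then have "x < 2 ^ (m + e)" using assms(4) by linarith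
  have returns: "(fmap f (m + e) ^^ a) x = x \<longleftrightarrow> [(poly p ^^ a) x = x] (mod 2 ^ (m + e))" for a
    using fmap_funpow_eq_iff_cong[OF assms(1,2,3) \<open>x < 2 ^ (m + e)\<close>] .
  have returns_m: "(fmap f m ^^ a) x = x \<longleftrightarrow> [(poly p ^^ a) x = x] (mod 2 ^ m)" for a
    using fmap_funpow_eq_iff_cong[OF assms(1) _ assms(3,4)] assms(2) by simp
  have not_returns: "\<not> [(poly p ^^ (K * 2 ^ e')) x = x] (mod 2 ^ Suc (m + e'))" for e'
    using exact[of e'] cong_exact_power_2_iff by blast
  obtain b where "(poly p ^^ (K * 2 ^ e)) x = x + 2 ^ (m + e) * b" using exact by blast
  then have "[(poly p ^^ (K * 2 ^ e)) x = x] (mod 2 ^ (m + e))" by (simp add: cong_iff_dvd_diff)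
  then have fixed: "(fmap f (m + e) ^^ (K * 2 ^ e)) x = x" using returns by simp
  have "0 < K" using min_period_pos[OF assms(5)] .
  then obtain q where q: "min_period (fmap f (m + e)) x q"
    using min_period_exists[OF fixed] by auto
  have "[(poly p ^^ q) x = x] (mod 2 ^ (m + e))" using returns min_period_fixpoint[OF q] by simp
  then have "[(poly p ^^ q) x = x] (mod 2 ^ m)" by (rule cong_dvd_modulus) (simp add: le_imp_power_dvd)
  then have "K dvd q" using returns_m min_period_funpow_eq_iff[OF assms(5)] by simp
  then obtain t where t: "q = K * t" by (elim dvdE)
  have "q dvd K * 2 ^ e" using min_period_funpow_eq_iff[OF q] fixed by simp
  then have "t dvd 2 ^ e" using t \<open>0 < K\<close> by simp
  then obtain i where "i \<le> e" and qi: "q = K * 2 ^ i"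
    using t by (auto simp: divides_primepow_nat)
  show ?thesis
  proof (cases "i = e")
    case True
    then show ?thesis using q qi by simp
  next
    case False
    then obtain e' where e': "e = Suc e'" "i \<le> e'" using \<open>i \<le> e\<close> by (cases e) auto
    then have "q dvd K * 2 ^ e'" using qi by (simp add: le_imp_power_dvd)
    then have "[(poly p ^^ (K * 2 ^ e')) x = x] (mod 2 ^ Suc (m + e'))"
      using returns min_period_funpow_eq_iff[OF q] e'(1) by simp
    then show ?thesis using not_returns by blast
  qed
qed

lemma is_cycle_residues_above:
  assumes "agrees_upto N f p" and "m + e \<le> N" and "0 \<le> x" and "x < 2 ^ m"
    and "min_period (fmap f m) x K" and "m \<ge> 2"
    and "(poly p ^^ K) x = x + 2 ^ m * b" and "odd b" and "[iterate_deriv p K x = 1] (mod 4)"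
  shows "is_cycle f (m + e) (residues_above m (forward_orbit (fmap f m) x) (m + e))"
proof -
  let ?\<tau> = "forward_orbit (fmap f m) x" and ?O = "forward_orbit (fmap f (m + e)) x"
  have "\<exists>b. (poly p ^^ (K * 2 ^ e)) x = x + 2 ^ (m + e) * b \<and> odd b" for e
    using funpow_power_2_exact[OF assms(6-9)] by blast
  then have period: "min_period (fmap f (m + e)) x (K * 2 ^ e)"
    using min_period_exact_displacement[OF assms(1-5)] by blast
  have "(2::int) ^ m \<le> 2 ^ (m + e)" by (rule power_increasing) simp_all
  then have "x < 2 ^ (m + e)" using assms(4) by linarith
  have sub: "?O \<subseteq> residues_above m ?\<tau> (m + e)"
  proof
    fix y assume "y \<in> ?O"
    then obtain i where y: "y = (fmap f (m + e) ^^ i) x" by blast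
    have "x mod 2 ^ (m + e) = x" "x mod 2 ^ m = x"
      using assms(3,4) \<open>x < 2 ^ (m + e)\<close> by simp_all
    then have "y = (poly p ^^ i) x mod 2 ^ (m + e)" "(fmap f m ^^ i) x = (poly p ^^ i) x mod 2 ^ m"
      using y fmap_funpow_agrees[OF assms(1), of _ i x] assms(2) by (metis le_add1 le_trans)+
    then have "y mod 2 ^ m = (fmap f m ^^ i) x" by (simp add: mod_mod_cancel le_imp_power_dvd)
    then have "y mod 2 ^ m \<in> ?\<tau>" by blast
    moreover have "0 \<le> y" "y < 2 ^ (m + e)"
      using y fmap_funpow_range assms(3) \<open>x < 2 ^ (m + e)\<close> by blast+
    ultimately show "y \<in> residues_above m ?\<tau> (m + e)" unfolding residues_above_def by blast
  qed
  have "card ?O = card (residues_above m ?\<tau> (m + e))"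
  proof -
    have "?\<tau> \<subseteq> {0..<2 ^ m}" using fmap_funpow_range assms(3,4) by fastforce
    then show ?thesis
      using card_residues_above card_forward_orbit[OF assms(5)] card_forward_orbit[OF period]
      by (simp add: mult.commute)
  qed
  moreover have "finite (residues_above m ?\<tau> (m + e))"
    by (rule finite_subset[of _ "{0..<2 ^ (m + e)}"]) (auto simp: residues_above_def)
  ultimately have "?O = residues_above m ?\<tau> (m + e)" using card_subset_eq sub by blast
  moreover have "0 < K * 2 ^ e" using min_period_pos[OF period] .
  ultimately show ?thesis
    unfolding is_cycle_def using assms(3) \<open>x < 2 ^ (m + e)\<close> min_period_fixpoint[OF period] by blast
qed

lemma lies_above_grows:
  assumes "\<tau> \<subseteq> {0..<2 ^ m}" and "lies_above f m \<tau> (m + e) \<rho>"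
    and "is_cycle f (m + e) (residues_above m \<tau> (m + e))"
    and "is_cycle f (m + Suc e) (residues_above m \<tau> (m + Suc e))"
  shows "grows f (m + e) \<rho>"
proof -
  have "\<rho> \<subseteq> residues_above m \<tau> (m + e)"
    using assms(2) is_cycle_subset unfolding lies_above_def residues_above_def by fastforce
  then have \<rho>: "\<rho> = residues_above m \<tau> (m + e)"
    using is_cycle_subset_eq[OF _ assms(3)] assms(2) unfolding lies_above_def by simp
  then have "lift_set (m + e) \<rho> = residues_above m \<tau> (m + Suc e)"
    using lift_set_residues_above[of m "m + e" \<tau>] by simp
  then show ?thesis
    unfolding grows_def using assms(4) card_residues_above[OF assms(1), of "Suc e"]
      card_residues_above[OF assms(1), of e] \<rho> by simp
qed

theorem corollary3p9:
  fixes f :: "(nat \<Rightarrow> int) list" and n m :: nat and \<sigma> \<tau> :: "int set"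
  assumes "is_Z2_poly f"
    and "n \<ge> 1"
    and "is_cycle f n \<sigma>"
    and "grows f n \<sigma>"
    and "m > n"
    and "lies_above f n \<sigma> m \<tau>"
    and "grows f m \<tau>"
  shows "\<forall>m'>m. \<forall>\<rho>. lies_above f m \<tau> m' \<rho> \<longrightarrow> grows f m' \<rho>"
proof (intro allI impI)
  fix m' \<rho> assume "m < m'" and \<rho>: "lies_above f m \<tau> m' \<rho>"
  obtain e where m': "m' = m + e" using \<open>m < m'\<close> less_imp_le le_Suc_ex by blast
  obtain p where p: "agrees_upto (Suc m') f p" using is_Z2_poly_agrees_upto[OF assms(1)] by blast
  have \<tau>: "is_cycle f m \<tau>" "\<forall>y\<in>\<tau>. y mod 2 ^ n \<in> \<sigma>"
    using assms(6) unfolding lies_above_def by auto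
  then obtain x K where x: "0 \<le> x" "x < 2 ^ m" and K: "min_period (fmap f m) x K"
    and \<tau>_orbit: "\<tau> = forward_orbit (fmap f m) x" by (elim is_cycle_min_period)
  have "x \<in> \<tau>" unfolding \<tau>_orbit by (metis (mono_tags) CollectI funpow_0)
  have "card \<tau> = K" unfolding \<tau>_orbit by (rule card_forward_orbit[OF K])
  have "[iterate_deriv p K x = 1] (mod 4)"
    using grows_iterate_deriv_cong_1[OF p assms(2,5) _ assms(3,4) \<tau> \<open>x \<in> \<tau>\<close>] \<open>m < m'\<close>
      \<open>card \<tau> = K\<close> by simp
  moreover obtain b where "(poly p ^^ K) x = x + 2 ^ m * b" "odd b"
    using grows_exact_displacement[OF p _ \<tau>(1) assms(7) \<open>x \<in> \<tau>\<close>] \<open>m < m'\<close>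
      \<open>card \<tau> = K\<close> by auto
  moreover have "m \<ge> 2" using assms(2,5) by simp
  ultimately have cycle: "is_cycle f (m + d) (residues_above m \<tau> (m + d))" if "m + d \<le> Suc m'" for d
    unfolding \<tau>_orbit using is_cycle_residues_above[OF p that x K] by blast
  show "grows f m' \<rho>"
    using lies_above_grows[OF is_cycle_subset[OF \<tau>(1)] _ cycle cycle] \<rho> unfolding m' by simp
qed

end
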